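(* Let $f:[a,b]\to\mathbb R$ be bounded and continuous almost everywhere with $\mathcal{ER}(f)=[\inf_{[a,b]}f,\sup_{[a,b]}f]$. Let $\{\Lambda_n=\{\lambda_{1,n},\ldots,\lambda_{d_n,n}\}\}_n$ be a sequence of finite multisets of real numbers with $d_n\to\infty$, such that $\{\Lambda_n\}_n$ has an asymptotic distribution described by $f$, and $\Lambda_n\subseteq[\inf_{[a,b]}f-\epsilon_n,\sup_{[a,b]}f+\epsilon_n]$ for every $n$, for some $\epsilon_n\to0$. Then, for every asymptotically uniform grid $\{x_{i,n}\}_{i=1,\ldots,d_n}$ in $[a,b]$ with $\{x_{i,n}\}_{i=1,\ldots,d_n}\subset[a,b]$, if $\sigma_n,\tau_n$ are permutations of $\{1,\ldots,d_n\}$ such that $[f(x_{\sigma_n(1),n}),\ldots,f(x_{\sigma_n(d_n),n})]$ and $[\lambda_{\tau_n(1),n},\ldots,\lambda_{\tau_n(d_n),n}]$ are sorted in increasing order, then $$\max_{i=1,\ldots,d_n}|f(x_{\sigma_n(i),n})-\lambda_{\tau_n(i),n}|\to0\quad(n\to\infty).$$ In particular, $\min_\tau\max_{i=1,\ldots,d_n}|f(x_{i,n})-\lambda_{\tau(i),n}|\to0$, the minimum being over all permutations $\tau$ of $\{1,\ldots,d_n\}$.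
   Context: For measurable $f:[a,b]\to\mathbb R$, the essential range is $\mathcal{ER}(f)=\{z\in\mathbb R:\mu_1\{x:|f(x)-z|<\epsilon\}>0\ \forall\epsilon>0\}$ ($\mu_1$ Lebesgue measure). A sequence of points $\{x_{i,n}\}_{i=1,\ldots,d_n}$ with $d_n\to\infty$ is an asymptotically uniform grid in $[a,b]$ if $\max_{i=1,\ldots,d_n}|x_{i,n}-(a+i(b-a)/d_n)|\to0$ as $n\to\infty$. A sequence of finite multisets $\{\Lambda_n=\{\lambda_{1,n},\ldots,\lambda_{d_n,n}\}\}_n$ with $d_n\to\infty$ has an asymptotic distribution described by $f$ if $\lim_{n}\frac1{d_n}\sum_{i=1}^{d_n}F(\lambda_{i,n})=\frac1{b-a}\int_a^bF(f(x))\,dx$ for every continuous $F:\mathbb C\to\mathbb C$ with bounded support. *)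

theory Defs
  imports "HOL-Analysis.Analysis" "HOL-Combinatorics.Permutations"
begin

definition essential_range :: "(real \<Rightarrow> real) \<Rightarrow> real \<Rightarrow> real \<Rightarrow> real set" where
  "essential_range f a b =
     {z. \<forall>e>0. emeasure lebesgue {x \<in> {a..b}. \<bar>f x - z\<bar> < e} > 0}"

definition asymptotically_uniform_grid ::
    "(nat \<Rightarrow> nat \<Rightarrow> real) \<Rightarrow> (nat \<Rightarrow> nat) \<Rightarrow> real \<Rightarrow> real \<Rightarrow> bool" where
  "asymptotically_uniform_grid x d a b \<longleftrightarrow>
     filterlim d at_top sequentially \<and>
     (\<lambda>n. Max {\<bar>x n i - (a + real i * (b - a) / real (d n))\<bar> | i. i \<in> {1..d n}})
        \<longlonglongrightarrow> 0"

definition has_asymptotic_distribution ::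
    "(nat \<Rightarrow> nat \<Rightarrow> real) \<Rightarrow> (nat \<Rightarrow> nat) \<Rightarrow> (real \<Rightarrow> real) \<Rightarrow> real \<Rightarrow> real \<Rightarrow> bool" where
  "has_asymptotic_distribution lam d f a b \<longleftrightarrow>
     filterlim d at_top sequentially \<and>
     (\<forall>F :: complex \<Rightarrow> complex. continuous_on UNIV F \<and> bounded {z. F z \<noteq> 0} \<longrightarrow>
        (\<lambda>n. (\<Sum>i=1..d n. F (complex_of_real (lam n i))) / of_nat (d n))
          \<longlonglongrightarrow> integral\<^sup>L (lebesgue_on {a..b}) (\<lambda>x. F (complex_of_real (f x)))
                / complex_of_real (b - a))"

end

theory Submission
  imports Defs
begin

text \<open>Both samples are asymptotically distributed like \<open>f\<close>: the values \<open>lam n i\<close> by hypothesis,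
  and the values \<open>f (x n i)\<close> because Riemann sums of a bounded a.e. continuous function converge
  on asymptotically uniform grids.  Test both against trapezoidal functions.  If the \<open>i\<close>-th
  smallest value of one sample exceeded the \<open>i\<close>-th smallest of the other by \<open>\<delta>\<close>, a trapezoid
  ramping down between the two would have empirical mass at most \<open>(i - 1) / d n\<close> on the first
  sample, and a slightly narrower one mass at least \<open>i / d n\<close> on the second.  Because the
  essential range of \<open>f\<close> is all of \<open>[inf f, sup f]\<close>, the limit distribution gives every
  subinterval positive mass, so finitely many such trapezoid pairs along a grid of mesh \<open>< \<delta> / 4\<close>
  have strictly ordered limits, and eventually no crossing is possible.  Hence the sorted samples
  are uniformly close, and the minimum over all pairings is at most the sorted one.\<close>

section \<open>Trapezoidal test functions\<close>

definition trapezoid :: "real \<Rightarrow> real \<Rightarrow> real \<Rightarrow> real \<Rightarrow> real" where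
  "trapezoid \<alpha> \<beta> w v = max 0 (min 1 (min ((v - \<alpha>) / w + 1) ((\<beta> - v) / w + 1)))"

lemma continuous_on_trapezoid: "continuous_on UNIV (trapezoid \<alpha> \<beta> w)"
  by (cases "w = 0") (auto simp: trapezoid_def intro!: continuous_intros)

lemma isCont_trapezoid: "isCont (trapezoid \<alpha> \<beta> w) v"
  using continuous_on_trapezoid by (simp add: continuous_on_eq_continuous_at)

lemma trapezoid_nonneg: "0 \<le> trapezoid \<alpha> \<beta> w v"
  and trapezoid_le_one: "trapezoid \<alpha> \<beta> w v \<le> 1"
  unfolding trapezoid_def by (simp_all add: max_def min_def)

lemma abs_trapezoid_le_one: "\<bar>trapezoid \<alpha> \<beta> w v\<bar> \<le> 1"
  using trapezoid_nonneg[of \<alpha> \<beta> w v] trapezoid_le_one[of \<alpha> \<beta> w v] by simp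

lemma trapezoid_eq_one:
  assumes "0 < w" "\<alpha> \<le> v" "v \<le> \<beta>"
  shows "trapezoid \<alpha> \<beta> w v = 1"
proof -
  have "1 \<le> (v - \<alpha>) / w + 1" "1 \<le> (\<beta> - v) / w + 1"
    using assms by simp_all
  then show ?thesis unfolding trapezoid_def by (simp add: min_def)
qed

lemma trapezoid_eq_zero_right:
  assumes "0 < w" "\<beta> + w \<le> v"
  shows "trapezoid \<alpha> \<beta> w v = 0"
proof -
  have "(\<beta> - v) / w \<le> -1" using assms by (simp add: divide_le_eq)
  then show ?thesis unfolding trapezoid_def by (intro max_absorb1) linarith
qed

lemma trapezoid_eq_zero_left:
  assumes "0 < w" "v \<le> \<alpha> - w"
  shows "trapezoid \<alpha> \<beta> w v = 0"
proof -
  have "(v - \<alpha>) / w \<le> -1" using assms by (simp add: divide_le_eq)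
  then show ?thesis unfolding trapezoid_def by (intro max_absorb1) linarith
qed

lemma trapezoid_mono:
  assumes "0 < w" "\<beta> \<le> \<beta>'"
  shows "trapezoid \<alpha> \<beta> w v \<le> trapezoid \<alpha> \<beta>' w v"
proof -
  have "(\<beta> - v) / w \<le> (\<beta>' - v) / w" using assms by (simp add: divide_right_mono)
  then show ?thesis unfolding trapezoid_def by (intro max.mono min.mono order_refl) simp_all
qed

lemma bounded_trapezoid_support:
  assumes "0 < w"
  shows "bounded {v. trapezoid \<alpha> \<beta> w v \<noteq> 0}"
proof (rule bounded_subset[OF bounded_closed_interval[of "\<alpha> - w" "\<beta> + w"]], rule subsetI)
  fix v assume "v \<in> {v. trapezoid \<alpha> \<beta> w v \<noteq> 0}"
  then show "v \<in> {\<alpha> - w .. \<beta> + w}"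
    using trapezoid_eq_zero_left[OF assms, of v \<alpha> \<beta>] trapezoid_eq_zero_right[OF assms, of \<beta> v \<alpha>]
    by (cases "v \<le> \<alpha> - w"; cases "\<beta> + w \<le> v") auto
qed

section \<open>Sorted samples with a common limit distribution\<close>

definition sample_mean :: "nat \<Rightarrow> (nat \<Rightarrow> real) \<Rightarrow> real" where
  "sample_mean D v = (\<Sum>i=1..D. v i) / real D"

lemma sample_mean_permute: "p permutes {1..D} \<Longrightarrow> sample_mean D (\<lambda>i. v (p i)) = sample_mean D v"
  unfolding sample_mean_def using sum.permute[of p "{1..D}" v] by (simp add: comp_def)

lemma sum_ge_card_prefix:
  fixes v :: "nat \<Rightarrow> real"
  assumes "i \<in> {1..D}" "\<And>j. j \<in> {1..D} \<Longrightarrow> 0 \<le> v j" "\<And>j. j \<in> {1..i} \<Longrightarrow> 1 \<le> v j"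
  shows "real i \<le> (\<Sum>j=1..D. v j)"
proof -
  have "real i = (\<Sum>j=1..i. 1)" by simp
  also have "\<dots> \<le> (\<Sum>j=1..i. v j)" using assms(3) by (rule sum_mono)
  also have "\<dots> \<le> (\<Sum>j=1..D. v j)" using assms(1,2) by (intro sum_mono2) auto
  finally show ?thesis .
qed

lemma sum_le_card_prefix:
  fixes v :: "nat \<Rightarrow> real"
  assumes "i \<in> {1..D}" "\<And>j. j \<in> {1..D} \<Longrightarrow> v j \<le> 1" "\<And>j. j \<in> {i..D} \<Longrightarrow> v j \<le> 0"
  shows "(\<Sum>j=1..D. v j) \<le> real i - 1"
proof -
  have "{1..D} = {1..<i} \<union> {i..D}" using assms(1) by auto
  then have "(\<Sum>j=1..D. v j) = (\<Sum>j=1..<i. v j) + (\<Sum>j=i..D. v j)"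
    by (simp add: sum.union_disjoint ivl_disj_int)
  also have "\<dots> \<le> (\<Sum>j=1..<i. 1) + 0"
    using assms by (intro add_mono sum_mono sum_nonpos) auto
  also have "\<dots> = real i - 1" using assms(1) by (simp add: of_nat_diff)
  finally show ?thesis .
qed

lemma sorted_crossing_sum_less:
  fixes y z :: "nat \<Rightarrow> real"
  assumes y: "mono_on {1..D} y" and z: "mono_on {1..D} z" and i: "i \<in> {1..D}" and w: "0 < w"
    and z_ge: "\<And>j. j \<in> {1..D} \<Longrightarrow> \<alpha> \<le> z j" and z_i: "z i \<le> \<beta>" and y_i: "\<beta>' + w \<le> y i"
  shows "(\<Sum>j=1..D. trapezoid \<alpha> \<beta>' w (y j)) < (\<Sum>j=1..D. trapezoid \<alpha> \<beta> w (z j))"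
proof -
  have "(\<Sum>j=1..D. trapezoid \<alpha> \<beta>' w (y j)) \<le> real i - 1"
  proof (rule sum_le_card_prefix[OF i trapezoid_le_one])
    fix j assume "j \<in> {i..D}"
    then have "y i \<le> y j" using i by (intro mono_onD[OF y]) auto
    then show "trapezoid \<alpha> \<beta>' w (y j) \<le> 0" using y_i w by (simp add: trapezoid_eq_zero_right)
  qed
  also have "\<dots> < real i" by simp
  also have "\<dots> \<le> (\<Sum>j=1..D. trapezoid \<alpha> \<beta> w (z j))"
  proof (rule sum_ge_card_prefix[OF i trapezoid_nonneg])
    fix j assume j: "j \<in> {1..i}"
    then have "z j \<le> z i" using i by (intro mono_onD[OF z]) auto
    moreover have "\<alpha> \<le> z j" using i j by (intro z_ge) auto
    ultimately show "1 \<le> trapezoid \<alpha> \<beta> w (z j)" using z_i w by (simp add: trapezoid_eq_one)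
  qed
  finally show ?thesis .
qed

lemma grid_point_between:
  fixes h m c :: real
  assumes "0 < h" "m \<le> c"
  obtains k :: nat where "c \<le> m + real k * h" "m + real k * h < c + h"
proof
  define k where "k = nat \<lceil>(c - m) / h\<rceil>"
  have "real k = of_int \<lceil>(c - m) / h\<rceil>" unfolding k_def using assms by simp
  then have "(c - m) / h \<le> real k" "real k < (c - m) / h + 1" by linarith+
  then show "c \<le> m + real k * h" "m + real k * h < c + h"
    using assms(1) by (simp_all add: field_simps)
qed

definition trapezoid_means_tendsto ::
    "(nat \<Rightarrow> nat) \<Rightarrow> (nat \<Rightarrow> nat \<Rightarrow> real) \<Rightarrow> ((real \<Rightarrow> real) \<Rightarrow> real) \<Rightarrow> bool" where
  "trapezoid_means_tendsto d y L \<longleftrightarrow>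
     (\<forall>\<alpha> \<beta> w. 0 < w \<longrightarrow>
        (\<lambda>n. sample_mean (d n) (\<lambda>i. trapezoid \<alpha> \<beta> w (y n i))) \<longlonglongrightarrow> L (trapezoid \<alpha> \<beta> w))"

definition asymptotically_within :: "(nat \<Rightarrow> nat) \<Rightarrow> (nat \<Rightarrow> nat \<Rightarrow> real) \<Rightarrow> real \<Rightarrow> real \<Rightarrow> bool" where
  "asymptotically_within d y m M \<longleftrightarrow>
     (\<forall>e>0. eventually (\<lambda>n. \<forall>i\<in>{1..d n}. y n i \<in> {m - e..M + e}) sequentially)"

text \<open>The two trapezoids differ by at least the indicator of \<open>]\<beta> + w, \<beta>'[\<close>, so this says
  that \<open>L\<close> gives positive mass to every open subinterval of \<open>[m, M]\<close>.\<close>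
definition charges_subintervals :: "((real \<Rightarrow> real) \<Rightarrow> real) \<Rightarrow> real \<Rightarrow> real \<Rightarrow> bool" where
  "charges_subintervals L m M \<longleftrightarrow>
     (\<forall>\<alpha> \<beta> \<beta>' w. 0 < w \<and> \<alpha> \<le> m \<and> m \<le> \<beta> + w \<and> \<beta> + w < \<beta>' \<and> \<beta>' \<le> M \<longrightarrow>
        L (trapezoid \<alpha> \<beta> w) < L (trapezoid \<alpha> \<beta>' w))"

lemma trapezoid_means_tendsto_permute:
  assumes "trapezoid_means_tendsto d y L" "\<And>n. p n permutes {1..d n}"
  shows "trapezoid_means_tendsto d (\<lambda>n i. y n (p n i)) L"
proof -
  have "sample_mean (d n) (\<lambda>i. trapezoid \<alpha> \<beta> w (y n (p n i))) =
      sample_mean (d n) (\<lambda>i. trapezoid \<alpha> \<beta> w (y n i))" for \<alpha> \<beta> w n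
    using sample_mean_permute[OF assms(2)] .
  then show ?thesis using assms(1) by (simp add: trapezoid_means_tendsto_def)
qed

lemma asymptotically_within_permute:
  assumes "asymptotically_within d y m M" "\<And>n. p n permutes {1..d n}"
  shows "asymptotically_within d (\<lambda>n i. y n (p n i)) m M"
  unfolding asymptotically_within_def
proof (intro allI impI)
  fix e :: real assume "0 < e"
  with assms(1) have "eventually (\<lambda>n. \<forall>i\<in>{1..d n}. y n i \<in> {m - e..M + e}) sequentially"
    by (simp add: asymptotically_within_def)
  then show "eventually (\<lambda>n. \<forall>i\<in>{1..d n}. y n (p n i) \<in> {m - e..M + e}) sequentially"
    by eventually_elim (use permutes_in_image[OF assms(2)] in blast)
qed

lemma charges_subintervalsD:
  assumes "charges_subintervals L m M" "0 < w" "\<alpha> \<le> m" "m \<le> \<beta> + w" "\<beta> + w < \<beta>'" "\<beta>' \<le> M"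
  shows "L (trapezoid \<alpha> \<beta> w) < L (trapezoid \<alpha> \<beta>' w)"
  using assms unfolding charges_subintervals_def by blast

lemma asymptotically_withinD:
  assumes "asymptotically_within d y m M" "0 < e"
  shows "eventually (\<lambda>n. \<forall>i\<in>{1..d n}. m - e \<le> y n i \<and> y n i \<le> M + e) sequentially"
  using assms unfolding asymptotically_within_def by simp

lemma exists_uniform_mesh:
  fixes m M \<epsilon> :: real
  assumes "m < M" "0 < \<epsilon>"
  obtains K :: nat and h where "0 < h" "h < \<epsilon>" "M = m + real K * h"
proof
  define K :: nat where "K = nat \<lceil>(M - m) / \<epsilon>\<rceil> + 1"
  have K_pos: "0 < real K" unfolding K_def by simp
  have "(M - m) / \<epsilon> < K" unfolding K_def by linarith
  then show "0 < (M - m) / K" "(M - m) / K < \<epsilon>"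
    using assms K_pos by (simp_all add: field_simps)
  show "M = m + real K * ((M - m) / K)" using K_pos by simp
qed

lemma eventually_level_means_less:
  assumes y_lim: "trapezoid_means_tendsto d y L" and z_lim: "trapezoid_means_tendsto d z L"
    and gap: "charges_subintervals L m M" and h: "0 < h" and K: "m + real K * h \<le> M"
  shows "eventually (\<lambda>n. \<forall>k\<in>{..<K}.
      sample_mean (d n) (\<lambda>i. trapezoid (m - 1) (m + real k * h) (h / 3) (z n i)) <
      sample_mean (d n) (\<lambda>i. trapezoid (m - 1) (m + real k * h + 2 * h / 3) (h / 3) (y n i)))
    sequentially"
proof (intro eventually_ball_finite ballI)
  fix k assume "k \<in> {..<K}"
  let ?\<phi> = "trapezoid (m - 1) (m + real k * h) (h / 3)"
  let ?\<psi> = "trapezoid (m - 1) (m + real k * h + 2 * h / 3) (h / 3)"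
  have "(real k + 1) * h \<le> real K * h" using \<open>k \<in> {..<K}\<close> h by (intro mult_right_mono) auto
  with K have "m + real k * h + h \<le> M" by (simp add: distrib_right)
  with h have "0 < L ?\<psi> - L ?\<phi>" by (simp add: charges_subintervalsD[OF gap])
  moreover have "(\<lambda>n. sample_mean (d n) (\<lambda>i. ?\<psi> (y n i)) - sample_mean (d n) (\<lambda>i. ?\<phi> (z n i)))
      \<longlonglongrightarrow> L ?\<psi> - L ?\<phi>"
    using y_lim z_lim h unfolding trapezoid_means_tendsto_def by (intro tendsto_diff) auto
  ultimately have "eventually (\<lambda>n.
      0 < sample_mean (d n) (\<lambda>i. ?\<psi> (y n i)) - sample_mean (d n) (\<lambda>i. ?\<phi> (z n i))) sequentially"
    by (rule order_tendstoD(1)[rotated])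
  then show "eventually (\<lambda>n.
      sample_mean (d n) (\<lambda>i. ?\<phi> (z n i)) < sample_mean (d n) (\<lambda>i. ?\<psi> (y n i))) sequentially"
    by eventually_elim simp
qed simp

lemma sorted_sample_below_next_level:
  fixes y z :: "nat \<Rightarrow> real"
  assumes y: "mono_on {1..D} y" and z: "mono_on {1..D} z" and i: "i \<in> {1..D}" and h: "0 < h"
    and z_ge: "\<And>j. j \<in> {1..D} \<Longrightarrow> m - 1 \<le> z j"
    and means: "\<forall>k\<in>{..<K}.
      sample_mean D (\<lambda>j. trapezoid (m - 1) (m + real k * h) (h / 3) (z j)) <
      sample_mean D (\<lambda>j. trapezoid (m - 1) (m + real k * h + 2 * h / 3) (h / 3) (y j))"
    and room: "max (z i) m + h < m + real K * h"
  shows "y i < max (z i) m + 2 * h"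
proof (rule ccontr)
  assume crossing: "\<not> y i < max (z i) m + 2 * h"
  obtain k where k: "max (z i) m \<le> m + real k * h" "m + real k * h < max (z i) m + h"
    using grid_point_between[OF h, of m "max (z i) m"] by auto
  with room have "real k * h < real K * h" by linarith
  with h have "k < K" by simp
  have "(\<Sum>j=1..D. trapezoid (m - 1) (m + real k * h + 2 * h / 3) (h / 3) (y j)) <
      (\<Sum>j=1..D. trapezoid (m - 1) (m + real k * h) (h / 3) (z j))"
    using k crossing h by (intro sorted_crossing_sum_less[OF y z i _ z_ge]) auto
  moreover have "sample_mean D (\<lambda>j. trapezoid (m - 1) (m + real k * h) (h / 3) (z j)) <
      sample_mean D (\<lambda>j. trapezoid (m - 1) (m + real k * h + 2 * h / 3) (h / 3) (y j))"
    using means \<open>k < K\<close> by blast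
  ultimately show False
    using i by (simp add: sample_mean_def divide_less_cancel)
qed

lemma sorted_samples_eventually_le:
  fixes y z :: "nat \<Rightarrow> nat \<Rightarrow> real"
  assumes y_lim: "trapezoid_means_tendsto d y L" and z_lim: "trapezoid_means_tendsto d z L"
    and gap: "charges_subintervals L m M"
    and y_within: "asymptotically_within d y m M" and z_within: "asymptotically_within d z m M"
    and y_sorted: "\<And>n. mono_on {1..d n} (y n)" and z_sorted: "\<And>n. mono_on {1..d n} (z n)"
    and \<delta>: "0 < \<delta>"
  shows "eventually (\<lambda>n. \<forall>i\<in>{1..d n}. y n i \<le> z n i + \<delta>) sequentially"
proof (cases "M - m < \<delta> / 2")
  case True
  have "0 < \<delta> / 4" using \<delta> by simp
  from asymptotically_withinD[OF y_within this] asymptotically_withinD[OF z_within this]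
  show ?thesis
  proof eventually_elim
    case (elim n)
    show ?case
    proof
      fix i assume "i \<in> {1..d n}"
      with elim have "y n i \<le> M + \<delta> / 4" "m - \<delta> / 4 \<le> z n i" by blast+
      with True show "y n i \<le> z n i + \<delta>" by linarith
    qed
  qed
next
  case False
  with \<delta> have "m < M" by linarith
  then obtain K h where h: "0 < h" "h < \<delta> / 4" and M: "M = m + real K * h"
    by (rule exists_uniform_mesh[where \<epsilon> = "\<delta> / 4"]) (use \<delta> in simp)
  define e where "e = min 1 (\<delta> / 4)"
  have e: "0 < e" "e \<le> 1" "e \<le> \<delta> / 4" using \<delta> by (simp_all add: e_def)
  from eventually_level_means_less[OF y_lim z_lim gap h(1) eq_refl[OF M[symmetric]]]
    asymptotically_withinD[OF y_within e(1)] asymptotically_withinD[OF z_within e(1)]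
  show ?thesis
  proof eventually_elim
    case (elim n)
    show ?case
    proof
      fix i assume i: "i \<in> {1..d n}"
      have "y n i \<le> M + e" "m - e \<le> z n i" using elim(2,3) i by blast+
      txt \<open>Otherwise a level of the mesh would separate \<open>z n i\<close> from \<open>y n i\<close>.\<close>
      show "y n i \<le> z n i + \<delta>"
      proof (rule ccontr)
        assume crossing: "\<not> y n i \<le> z n i + \<delta>"
        with \<open>y n i \<le> M + e\<close> h e False have "max (z n i) m + h < M" by (simp add: max_def)
        then have "y n i < max (z n i) m + 2 * h"
          using elim(3) e(2) unfolding M
          by (intro sorted_sample_below_next_level[OF y_sorted z_sorted i h(1) _ elim(1)]) force+
        with crossing \<open>m - e \<le> z n i\<close> h e show False by (auto simp: max_def split: if_split_asm)
      qed
    qed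
  qed
qed

lemma sorted_samples_tendsto:
  fixes y z :: "nat \<Rightarrow> nat \<Rightarrow> real"
  assumes d_pos: "eventually (\<lambda>n. 0 < d n) sequentially"
    and y_lim: "trapezoid_means_tendsto d y L" and z_lim: "trapezoid_means_tendsto d z L"
    and gap: "charges_subintervals L m M"
    and y_within: "asymptotically_within d y m M" and z_within: "asymptotically_within d z m M"
    and y_sorted: "\<And>n. mono_on {1..d n} (y n)" and z_sorted: "\<And>n. mono_on {1..d n} (z n)"
  shows "(\<lambda>n. Max {\<bar>y n i - z n i\<bar> | i. i \<in> {1..d n}}) \<longlonglongrightarrow> 0"
proof (rule order_tendstoI)
  fix c :: real assume "c < 0"
  from d_pos show "eventually (\<lambda>n. c < Max {\<bar>y n i - z n i\<bar> | i. i \<in> {1..d n}}) sequentially"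
  proof eventually_elim
    case (elim n)
    then have "\<bar>y n 1 - z n 1\<bar> \<le> Max {\<bar>y n i - z n i\<bar> | i. i \<in> {1..d n}}"
      unfolding Setcompr_eq_image by (intro Max_ge) auto
    with \<open>c < 0\<close> show ?case by linarith
  qed
next
  fix c :: real assume "0 < c"
  then have "0 < c / 2" by simp
  from d_pos
    sorted_samples_eventually_le[OF y_lim z_lim gap y_within z_within y_sorted z_sorted this]
    sorted_samples_eventually_le[OF z_lim y_lim gap z_within y_within z_sorted y_sorted this]
  show "eventually (\<lambda>n. Max {\<bar>y n i - z n i\<bar> | i. i \<in> {1..d n}} < c) sequentially"
  proof eventually_elim
    case (elim n)
    have "\<bar>y n i - z n i\<bar> \<le> c / 2" if "i \<in> {1..d n}" for i
      using elim(2)[rule_format, OF that] elim(3)[rule_format, OF that]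
      unfolding abs_le_iff by (intro conjI; linarith)
    then have "Max {\<bar>y n i - z n i\<bar> | i. i \<in> {1..d n}} \<le> c / 2"
      using elim(1) unfolding Setcompr_eq_image by (subst Max_le_iff) auto
    with \<open>0 < c\<close> show ?case by linarith
  qed
qed

lemma asymptotically_within_shrinking:
  assumes eps: "eps \<longlonglongrightarrow> 0" and y: "\<And>n i. i \<in> {1..d n} \<Longrightarrow> y n i \<in> {m - eps n..M + eps n}"
  shows "asymptotically_within d y m M"
  unfolding asymptotically_within_def
proof (intro allI impI)
  fix e :: real assume "0 < e"
  with eps have "eventually (\<lambda>n. \<bar>eps n\<bar> < e) sequentially"
    by (simp add: tendsto_iff dist_real_def)
  then show "eventually (\<lambda>n. \<forall>i\<in>{1..d n}. y n i \<in> {m - e..M + e}) sequentially"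
    by eventually_elim (use y in fastforce)
qed

lemma sorted_rearrangements_tendsto:
  fixes y z :: "nat \<Rightarrow> nat \<Rightarrow> real"
  assumes d_pos: "eventually (\<lambda>n. 0 < d n) sequentially"
    and y_lim: "trapezoid_means_tendsto d y L" and z_lim: "trapezoid_means_tendsto d z L"
    and gap: "charges_subintervals L m M"
    and y_within: "asymptotically_within d y m M" and z_within: "asymptotically_within d z m M"
    and \<sigma>: "\<And>n. \<sigma> n permutes {1..d n}" and \<tau>: "\<And>n. \<tau> n permutes {1..d n}"
    and y_sorted: "\<And>n. mono_on {1..d n} (\<lambda>i. y n (\<sigma> n i))"
    and z_sorted: "\<And>n. mono_on {1..d n} (\<lambda>i. z n (\<tau> n i))"
  shows "(\<lambda>n. Max {\<bar>y n (\<sigma> n i) - z n (\<tau> n i)\<bar> | i. i \<in> {1..d n}}) \<longlonglongrightarrow> 0"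
  using sorted_samples_tendsto[OF d_pos
      trapezoid_means_tendsto_permute[OF y_lim \<sigma>] trapezoid_means_tendsto_permute[OF z_lim \<tau>] gap
      asymptotically_within_permute[OF y_within \<sigma>] asymptotically_within_permute[OF z_within \<tau>]
      y_sorted z_sorted] .

section \<open>Sorting permutations\<close>

lemma exists_sorting_permutation:
  fixes v :: "nat \<Rightarrow> 'a::linorder"
  obtains p where "p permutes {1..D}" "mono_on {1..D} (\<lambda>i. v (p i))"
proof
  define xs where "xs = sort_key v [1..<D+1]"
  define p where "p i = (if i \<in> {1..D} then xs ! (i - 1) else i)" for i
  have xs: "distinct xs" "set xs = {1..D}" "length xs = D" "sorted (map v xs)"
    by (auto simp: xs_def length_sort)
  have "bij_betw (\<lambda>i. i - 1) {1..D} {..<D}"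
    by (rule bij_betwI[where g = Suc]) auto
  moreover have "bij_betw ((!) xs) {..<D} {1..D}"
    using xs by (intro bij_betw_nth) auto
  ultimately have "bij_betw ((!) xs \<circ> (\<lambda>i. i - 1)) {1..D} {1..D}"
    by (rule bij_betw_trans)
  then have "bij_betw p {1..D} {1..D}"
    by (rule bij_betw_cong[THEN iffD1, rotated]) (simp add: p_def)
  then show "p permutes {1..D}"
    by (rule bij_imp_permutes) (auto simp: p_def)
  show "mono_on {1..D} (\<lambda>i. v (p i))"
  proof (rule mono_onI)
    fix i j assume ij: "i \<in> {1..D}" "j \<in> {1..D}" "i \<le> j"
    then have "map v xs ! (i - 1) \<le> map v xs ! (j - 1)"
      using xs(3,4) by (intro sorted_nth_mono) auto
    with xs(3) ij show "v (p i) \<le> v (p j)" by (simp add: p_def)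
  qed
qed

lemma exists_sorting_permutations:
  fixes v :: "nat \<Rightarrow> nat \<Rightarrow> 'a::linorder"
  obtains p where "\<And>n. p n permutes {1..d n}" "\<And>n. mono_on {1..d n} (\<lambda>i. v n (p n i))"
proof -
  have "\<forall>n. \<exists>q. q permutes {1..d n} \<and> mono_on {1..d n} (\<lambda>i. v n (q i))"
    by (metis exists_sorting_permutation)
  then show ?thesis using that by metis
qed

lemma Min_Max_permutations_le:
  fixes y z :: "nat \<Rightarrow> real"
  assumes \<sigma>: "\<sigma> permutes {1..D}" and \<tau>: "\<tau> permutes {1..D}"
  shows "Min {Max {\<bar>y i - z (\<rho> i)\<bar> | i. i \<in> {1..D}} | \<rho>. \<rho> permutes {1..D}}
           \<le> Max {\<bar>y (\<sigma> i) - z (\<tau> i)\<bar> | i. i \<in> {1..D}}"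
proof -
  define \<rho> where "\<rho> = \<tau> \<circ> inv \<sigma>"
  have "\<rho> permutes {1..D}" unfolding \<rho>_def using \<sigma> \<tau> by (intro permutes_compose permutes_inv)
  have "(\<lambda>i. \<bar>y i - z (\<rho> i)\<bar>) ` {1..D} = (\<lambda>i. \<bar>y i - z (\<rho> i)\<bar>) ` (\<sigma> ` {1..D})"
    by (simp only: permutes_image[OF \<sigma>])
  also have "\<dots> = (\<lambda>i. \<bar>y (\<sigma> i) - z (\<tau> i)\<bar>) ` {1..D}"
    unfolding image_image \<rho>_def by (simp add: permutes_inverses(2)[OF \<sigma>])
  finally have "Max {\<bar>y i - z (\<rho> i)\<bar> | i. i \<in> {1..D}} = Max {\<bar>y (\<sigma> i) - z (\<tau> i)\<bar> | i. i \<in> {1..D}}"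
    unfolding Setcompr_eq_image by (rule arg_cong[where f = Max])
  moreover have "finite {Max {\<bar>y i - z (\<rho> i)\<bar> | i. i \<in> {1..D}} | \<rho>. \<rho> permutes {1..D}}"
    using finite_permutations[of "{1..D}"] by (simp add: Setcompr_eq_image)
  ultimately show ?thesis
    using \<open>\<rho> permutes {1..D}\<close> by (metis (mono_tags, lifting) Min_le mem_Collect_eq)
qed

lemma Min_Max_permutations_tendsto_0:
  fixes y z :: "nat \<Rightarrow> nat \<Rightarrow> real"
  assumes d_pos: "eventually (\<lambda>n. 0 < d n) sequentially"
    and sorted_close: "\<And>\<sigma> \<tau>. (\<And>n. \<sigma> n permutes {1..d n}) \<Longrightarrow> (\<And>n. \<tau> n permutes {1..d n}) \<Longrightarrow>
      (\<And>n. mono_on {1..d n} (\<lambda>i. y n (\<sigma> n i))) \<Longrightarrow> (\<And>n. mono_on {1..d n} (\<lambda>i. z n (\<tau> n i))) \<Longrightarrow>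
      (\<lambda>n. Max {\<bar>y n (\<sigma> n i) - z n (\<tau> n i)\<bar> | i. i \<in> {1..d n}}) \<longlonglongrightarrow> 0"
  shows "(\<lambda>n. Min {Max {\<bar>y n i - z n (\<rho> i)\<bar> | i. i \<in> {1..d n}} | \<rho>. \<rho> permutes {1..d n}}) \<longlonglongrightarrow> 0"
proof -
  obtain \<sigma> where \<sigma>: "\<And>n. \<sigma> n permutes {1..d n}" "\<And>n. mono_on {1..d n} (\<lambda>i. y n (\<sigma> n i))"
    using exists_sorting_permutations[of d y] by blast
  obtain \<tau> where \<tau>: "\<And>n. \<tau> n permutes {1..d n}" "\<And>n. mono_on {1..d n} (\<lambda>i. z n (\<tau> n i))"
    using exists_sorting_permutations[of d z] by blast
  show ?thesis
  proof (rule tendsto_sandwich[OF _ _ tendsto_const sorted_close[OF \<sigma>(1) \<tau>(1) \<sigma>(2) \<tau>(2)]])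
    from d_pos
    show "eventually (\<lambda>n.
        0 \<le> Min {Max {\<bar>y n i - z n (\<rho> i)\<bar> | i. i \<in> {1..d n}} | \<rho>. \<rho> permutes {1..d n}}) sequentially"
    proof eventually_elim
      case (elim n)
      have "0 \<le> Max {\<bar>y n i - z n (\<rho> i)\<bar> | i. i \<in> {1..d n}}" for \<rho>
        using elim unfolding Setcompr_eq_image by (subst Max_ge_iff) auto
      moreover have "finite {Max {\<bar>y n i - z n (\<rho> i)\<bar> | i. i \<in> {1..d n}} | \<rho>. \<rho> permutes {1..d n}}"
        using finite_permutations[of "{1..d n}"] by (simp add: Setcompr_eq_image)
      moreover have "{Max {\<bar>y n i - z n (\<rho> i)\<bar> | i. i \<in> {1..d n}} | \<rho>. \<rho> permutes {1..d n}} \<noteq> {}"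
        using permutes_id by blast
      ultimately show ?case by (subst Min_ge_iff) auto
    qed
    show "eventually (\<lambda>n. Min {Max {\<bar>y n i - z n (\<rho> i)\<bar> | i. i \<in> {1..d n}} | \<rho>. \<rho> permutes {1..d n}}
        \<le> Max {\<bar>y n (\<sigma> n i) - z n (\<tau> n i)\<bar> | i. i \<in> {1..d n}}) sequentially"
      using Min_Max_permutations_le[OF \<sigma>(1) \<tau>(1)] by simp
  qed
qed

section \<open>Riemann sums on asymptotically uniform grids\<close>

definition upper_envelope :: "(real \<Rightarrow> real) \<Rightarrow> real set \<Rightarrow> real \<Rightarrow> real \<Rightarrow> real" where
  "upper_envelope g S r s = Sup (g ` (S \<inter> ball s r))"

context
  fixes g :: "real \<Rightarrow> real" and S :: "real set" and B :: real
  assumes g_bound: "\<forall>t\<in>S. \<bar>g t\<bar> \<le> B"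
begin

lemma bdd_above_envelope_values: "bdd_above (g ` (S \<inter> ball s r))"
  using g_bound by (auto intro!: bdd_aboveI[where M = B] simp: abs_le_iff)

lemma le_upper_envelope: "v \<in> S \<Longrightarrow> dist s v < r \<Longrightarrow> g v \<le> upper_envelope g S r s"
  unfolding upper_envelope_def by (rule cSup_upper[OF _ bdd_above_envelope_values]) auto

lemma abs_upper_envelope_le:
  assumes "s \<in> S" "0 < r"
  shows "\<bar>upper_envelope g S r s\<bar> \<le> B"
proof -
  have "g s \<le> upper_envelope g S r s" using assms by (intro le_upper_envelope) auto
  moreover have "upper_envelope g S r s \<le> B"
    unfolding upper_envelope_def using assms g_bound by (intro cSup_least) (auto simp: abs_le_iff)
  ultimately show ?thesis using g_bound assms(1) by (auto simp: abs_le_iff)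
qed

lemma upper_envelope_measurable:
  assumes S: "S \<in> sets lebesgue" and "0 < r"
  shows "upper_envelope g S r \<in> borel_measurable (lebesgue_on S)"
proof (subst borel_measurable_iff_greater, intro allI)
  fix c :: real
  define V where "V = (\<Union>v\<in>{v\<in>S. c < g v}. ball v r)"
  have "{s \<in> space (lebesgue_on S). c < upper_envelope g S r s} = S \<inter> V"
  proof (intro equalityI subsetI)
    fix s assume "s \<in> {s \<in> space (lebesgue_on S). c < upper_envelope g S r s}"
    then have s: "s \<in> S" "c < Sup (g ` (S \<inter> ball s r))" by (simp_all add: upper_envelope_def)
    then obtain v where "v \<in> S \<inter> ball s r" "c < g v"
      using \<open>0 < r\<close> bdd_above_envelope_values by (subst (asm) less_cSup_iff) auto
    then show "s \<in> S \<inter> V" using s(1) unfolding V_def by (auto simp: dist_commute)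
  next
    fix s assume "s \<in> S \<inter> V"
    then obtain v where "s \<in> S" "v \<in> S" "c < g v" "dist s v < r"
      unfolding V_def by (auto simp: dist_commute)
    then show "s \<in> {s \<in> space (lebesgue_on S). c < upper_envelope g S r s}"
      using le_upper_envelope[of v s r] by simp
  qed
  moreover have "open V" unfolding V_def by auto
  then have "S \<inter> V \<in> sets lebesgue" using S by (intro sets.Int) (auto intro: borel_open)
  ultimately show "{s \<in> space (lebesgue_on S). c < upper_envelope g S r s} \<in> sets (lebesgue_on S)"
    using S by (simp add: sets_restrict_space_iff)
qed

lemma upper_envelope_tendsto:
  assumes t: "t \<in> S" and cont: "continuous (at t within S) g"
  shows "(\<lambda>j. upper_envelope g S (1 / Suc j) t) \<longlonglongrightarrow> g t"
proof (rule order_tendstoI)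
  fix c assume "c < g t"
  moreover have "g t \<le> upper_envelope g S (1 / Suc j) t" for j
    using t by (intro le_upper_envelope) auto
  ultimately show "eventually (\<lambda>j. c < upper_envelope g S (1 / Suc j) t) sequentially"
    by (intro always_eventually allI) (rule order.strict_trans2)
next
  fix c assume "g t < c"
  then obtain \<delta> where \<delta>: "0 < \<delta>" "\<And>v. v \<in> S \<Longrightarrow> dist v t < \<delta> \<Longrightarrow> dist (g v) (g t) < (c - g t) / 2"
    using cont unfolding continuous_within_eps_delta by (metis half_gt_zero diff_gt_0_iff_gt)
  have "eventually (\<lambda>j. 1 / Suc j < \<delta>) sequentially"
    using order_tendstoD(2)[OF LIMSEQ_inverse_real_of_nat \<delta>(1)] by (simp add: inverse_eq_divide)
  then show "eventually (\<lambda>j. upper_envelope g S (1 / Suc j) t < c) sequentially"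
  proof eventually_elim
    case (elim j)
    have "upper_envelope g S (1 / Suc j) t \<le> g t + (c - g t) / 2"
      unfolding upper_envelope_def
    proof (rule cSup_least)
      show "g ` (S \<inter> ball t (1 / Suc j)) \<noteq> {}" using t by auto
      fix y assume "y \<in> g ` (S \<inter> ball t (1 / Suc j))"
      then obtain v where "y = g v" "v \<in> S" "dist v t < \<delta>"
        using elim by (auto simp: dist_commute)
      with \<delta>(2)[of v] abs_ge_self[of "g v - g t"] show "y \<le> g t + (c - g t) / 2"
        unfolding dist_real_def by linarith
    qed
    also have "\<dots> < c" using \<open>g t < c\<close> by (simp add: field_simps)
    finally show ?case .
  qed
qed

end

lemma borel_measurable_AE_continuous:
  fixes g :: "real \<Rightarrow> real"
  assumes g_bdd: "bounded (g ` S)" and S: "S \<in> sets lebesgue"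
    and cont: "AE t in lebesgue. t \<in> S \<longrightarrow> continuous (at t within S) g"
  shows "g \<in> borel_measurable (lebesgue_on S)"
proof -
  obtain B where "\<forall>y\<in>g ` S. \<bar>y\<bar> \<le> B"
    using g_bdd unfolding bounded_real by blast
  then have g_bound: "\<forall>t\<in>S. \<bar>g t\<bar> \<le> B" by simp
  define u where "u j t = indicator S t *\<^sub>R upper_envelope g S (1 / Suc j) t" for j t
  have "u j \<in> borel_measurable lebesgue" for j
    unfolding u_def using S upper_envelope_measurable[OF g_bound S, of "1 / Suc j"]
    by (subst borel_measurable_restrict_space_iff[symmetric]) auto
  then have "(\<lambda>t. lim (\<lambda>j. u j t)) \<in> borel_measurable lebesgue"
    by (rule borel_measurable_lim_metric)
  moreover have "AE t in lebesgue. lim (\<lambda>j. u j t) = indicator S t *\<^sub>R g t"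
    using cont
  proof eventually_elim
    case (elim t)
    show ?case
    proof (cases "t \<in> S")
      case True
      with elim have "(\<lambda>j. u j t) \<longlonglongrightarrow> g t"
        using upper_envelope_tendsto[OF g_bound, of t] by (simp add: u_def)
      with True show ?thesis by (simp add: limI)
    qed (simp add: u_def)
  qed
  ultimately have "(\<lambda>t. indicator S t *\<^sub>R g t) \<in> borel_measurable lebesgue"
    by (rule borel_measurable_AE)
  then show ?thesis
    using S by (subst borel_measurable_restrict_space_iff) auto
qed

lemma integrable_upper_envelope:
  fixes g :: "real \<Rightarrow> real"
  assumes g_bound: "\<forall>t\<in>S. \<bar>g t\<bar> \<le> B" and S: "S \<in> lmeasurable" and "0 < r"
  shows "integrable (lebesgue_on S) (upper_envelope g S r)"
proof (rule finite_measure.integrable_const_bound[where B = B])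
  show "finite_measure (lebesgue_on S)" using S by (rule finite_measure_lebesgue_on)
  show "upper_envelope g S r \<in> borel_measurable (lebesgue_on S)"
    using S \<open>0 < r\<close> by (intro upper_envelope_measurable[OF g_bound]) auto
  show "AE s in lebesgue_on S. norm (upper_envelope g S r s) \<le> B"
    using \<open>0 < r\<close> by (intro AE_I2) (simp add: abs_upper_envelope_le[OF g_bound])
qed

lemma integral_upper_envelope_tendsto:
  fixes g :: "real \<Rightarrow> real"
  assumes g_bound: "\<forall>t\<in>S. \<bar>g t\<bar> \<le> B" and S: "S \<in> lmeasurable"
    and cont: "AE t in lebesgue. t \<in> S \<longrightarrow> continuous (at t within S) g"
  shows "(\<lambda>j. integral\<^sup>L (lebesgue_on S) (upper_envelope g S (1 / Suc j)))
           \<longlonglongrightarrow> integral\<^sup>L (lebesgue_on S) g"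
proof (rule integral_dominated_convergence[where w = "\<lambda>_. B"])
  show "g \<in> borel_measurable (lebesgue_on S)"
    using g_bound S cont by (intro borel_measurable_AE_continuous boundedI[where B = B]) auto
  show "upper_envelope g S (1 / Suc j) \<in> borel_measurable (lebesgue_on S)" for j
    using S by (intro upper_envelope_measurable[OF g_bound]) auto
  show "integrable (lebesgue_on S) (\<lambda>_. B)"
    using S by (intro finite_measure.integrable_const finite_measure_lebesgue_on)
  show "AE s in lebesgue_on S. (\<lambda>j. upper_envelope g S (1 / Suc j) s) \<longlonglongrightarrow> g s"
    using fmeasurableD[OF S] cont upper_envelope_tendsto[OF g_bound]
    by (subst AE_restrict_space_iff) (auto elim!: eventually_mono)
  show "AE s in lebesgue_on S. norm (upper_envelope g S (1 / Suc j) s) \<le> B" for j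
    by (intro AE_I2) (simp add: abs_upper_envelope_le[OF g_bound])
qed

definition grid_cell :: "real \<Rightarrow> real \<Rightarrow> nat \<Rightarrow> real set" where
  "grid_cell a h i = {a + (real i - 1) * h <.. a + real i * h}"

lemma grid_cell_subset:
  assumes "0 < h" "i \<in> {1..D}"
  shows "grid_cell a h i \<subseteq> {a..a + real D * h}"
proof -
  have "0 \<le> (real i - 1) * h" "real i * h \<le> real D * h" using assms by (auto intro: mult_right_mono)
  then show ?thesis unfolding grid_cell_def by auto
qed

lemma measure_grid_cell: "0 < h \<Longrightarrow> measure lebesgue (grid_cell a h i) = h"
  by (simp add: grid_cell_def measure_completion algebra_simps)

lemma mem_grid_cell_iff:
  assumes h: "0 < h" and s: "a < s"
  shows "s \<in> grid_cell a h i \<longleftrightarrow> i = nat \<lceil>(s - a) / h\<rceil>"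
proof -
  have "s \<in> grid_cell a h i \<longleftrightarrow> real i - 1 < (s - a) / h \<and> (s - a) / h \<le> real i"
    unfolding grid_cell_def using h by (auto simp: field_simps)
  also have "\<dots> \<longleftrightarrow> \<lceil>(s - a) / h\<rceil> = int i" by (simp add: ceiling_eq_iff)
  also have "\<dots> \<longleftrightarrow> i = nat \<lceil>(s - a) / h\<rceil>"
  proof -
    have "0 < (s - a) / h" using h s by simp
    then show ?thesis by auto
  qed
  finally show ?thesis .
qed

lemma step_sum_le_integral:
  fixes c :: "nat \<Rightarrow> real" and u :: "real \<Rightarrow> real"
  assumes h: "0 < h" and b: "b = a + real D * h" and u: "integrable (lebesgue_on {a..b}) u"
    and below: "\<And>i s. i \<in> {1..D} \<Longrightarrow> s \<in> grid_cell a h i \<Longrightarrow> c i \<le> u s"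
  shows "(\<Sum>i=1..D. c i) * h \<le> integral\<^sup>L (lebesgue_on {a..b}) u"
proof -
  let ?M = "lebesgue_on {a..b}"
  define S where "S s = (\<Sum>i\<in>{1..D}. c i * indicator (grid_cell a h i) s)" for s
  have cell_sets: "grid_cell a h i \<in> sets ?M" if "i \<in> {1..D}" for i
    using grid_cell_subset[OF h that] unfolding b
    by (simp add: sets_restrict_space_iff grid_cell_def)
  have cell_integrable: "integrable ?M (\<lambda>s. c i * indicator (grid_cell a h i) s)"
    if "i \<in> {1..D}" for i
    using cell_sets[OF that] finite_measure.emeasure_finite[OF finite_measure_lebesgue_on, of "{a..b}"]
    by (simp add: less_top)
  have "integral\<^sup>L ?M S = (\<Sum>i\<in>{1..D}. c i * h)"
    unfolding S_def using cell_integrable cell_sets grid_cell_subset[OF h] h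
    by (subst Bochner_Integration.integral_sum)
      (auto simp: Int_absorb2 b measure_restrict_space measure_grid_cell)
  also have "\<dots> = (\<Sum>i=1..D. c i) * h" by (simp add: sum_distrib_right)
  finally have integral_S: "integral\<^sup>L ?M S = (\<Sum>i=1..D. c i) * h" .
  have "AE s in lebesgue. s \<noteq> a"
    using AE_lborel_singleton[of a] by (rule AE_completion)
  then have "AE s in ?M. S s \<le> u s"
  proof (subst AE_restrict_space_iff, simp, elim eventually_mono, intro impI)
    fix s assume "s \<noteq> a" and s: "s \<in> {a..b}"
    define i where "i = nat \<lceil>(s - a) / h\<rceil>"
    have "0 < (s - a) / h" "(s - a) / h \<le> real D"
      using \<open>s \<noteq> a\<close> s h unfolding b by (auto simp: field_simps)
    then have i: "i \<in> {1..D}" unfolding i_def by (auto simp: le_nat_iff ceiling_le_iff)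
    have cell: "s \<in> grid_cell a h j \<longleftrightarrow> j = i" for j
      unfolding i_def using \<open>s \<noteq> a\<close> s h by (intro mem_grid_cell_iff) auto
    have "S s = c i" unfolding S_def using i by (simp add: cell indicator_def)
    also have "\<dots> \<le> u s" using below[OF i] cell[of i] by simp
    finally show "S s \<le> u s" .
  qed
  moreover have "integrable ?M S"
    unfolding S_def by (intro Bochner_Integration.integrable_sum cell_integrable)
  ultimately have "integral\<^sup>L ?M S \<le> integral\<^sup>L ?M u"
    using u by (intro integral_mono_AE)
  then show ?thesis using integral_S by simp
qed

definition interval_mean :: "(real \<Rightarrow> real) \<Rightarrow> real \<Rightarrow> real \<Rightarrow> real" where
  "interval_mean g a b = integral\<^sup>L (lebesgue_on {a..b}) g / (b - a)"

lemma asymptotically_uniform_gridD: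
  assumes "asymptotically_uniform_grid x d a b" "0 < \<eta>"
  shows "eventually (\<lambda>n. \<forall>i\<in>{1..d n}. \<bar>x n i - (a + real i * (b - a) / real (d n))\<bar> < \<eta>)
           sequentially"
proof -
  let ?dev = "\<lambda>n i. \<bar>x n i - (a + real i * (b - a) / real (d n))\<bar>"
  have "(\<lambda>n. Max {?dev n i | i. i \<in> {1..d n}}) \<longlonglongrightarrow> 0"
    using assms(1) unfolding asymptotically_uniform_grid_def by blast
  from order_tendstoD(2)[OF this assms(2)]
  show ?thesis
  proof eventually_elim
    case (elim n)
    have "?dev n i \<le> Max {?dev n i | i. i \<in> {1..d n}}" if "i \<in> {1..d n}" for i
      using that unfolding Setcompr_eq_image by (intro Max_ge) auto
    with elim show ?case by fastforce
  qed
qed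

lemma riemann_sum_le_integral_upper_envelope:
  fixes g :: "real \<Rightarrow> real" and x :: "nat \<Rightarrow> real"
  assumes g_bound: "\<forall>t\<in>{a..b}. \<bar>g t\<bar> \<le> B"
    and h: "0 < h" "h < r / 2" and b: "b = a + real D * h"
    and x_in: "\<And>i. i \<in> {1..D} \<Longrightarrow> x i \<in> {a..b}"
    and x_close: "\<And>i. i \<in> {1..D} \<Longrightarrow> \<bar>x i - (a + real i * h)\<bar> < r / 2"
  shows "(\<Sum>i=1..D. g (x i)) * h \<le> integral\<^sup>L (lebesgue_on {a..b}) (upper_envelope g {a..b} r)"
proof (rule step_sum_le_integral[OF h(1) b])
  show "integrable (lebesgue_on {a..b}) (upper_envelope g {a..b} r)"
    using h by (intro integrable_upper_envelope[OF g_bound]) auto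
  fix i s assume i: "i \<in> {1..D}" and "s \<in> grid_cell a h i"
  then have "a + real i * h - h < s" "s \<le> a + real i * h" by (simp_all add: grid_cell_def algebra_simps)
  with x_close[OF i] h have "dist s (x i) < r"
    unfolding dist_real_def abs_less_iff by (intro conjI; linarith)
  with x_in[OF i] show "g (x i) \<le> upper_envelope g {a..b} r s"
    by (intro le_upper_envelope[OF g_bound])
qed

text \<open>Fix a radius \<open>r\<close> whose upper envelope has integral within \<open>e (b - a)\<close> of that of \<open>g\<close>
  (dominated convergence); for large \<open>n\<close> the Riemann sum is a lower step sum of this envelope.\<close>
lemma riemann_sample_mean_eventually_less:
  fixes g :: "real \<Rightarrow> real" and x :: "nat \<Rightarrow> nat \<Rightarrow> real"
  assumes ab: "a < b" and g_bound: "\<forall>t\<in>{a..b}. \<bar>g t\<bar> \<le> B"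
    and cont: "AE t in lebesgue. t \<in> {a..b} \<longrightarrow> continuous (at t within {a..b}) g"
    and grid: "asymptotically_uniform_grid x d a b" and x_in: "\<And>n i. i \<in> {1..d n} \<Longrightarrow> x n i \<in> {a..b}"
    and e: "0 < e"
  shows "eventually (\<lambda>n. sample_mean (d n) (\<lambda>i. g (x n i)) < interval_mean g a b + e) sequentially"
proof -
  let ?M = "lebesgue_on {a..b}"
  have "{a..b} \<in> lmeasurable" by simp
  from integral_upper_envelope_tendsto[OF g_bound this cont] e ab
  have "eventually (\<lambda>j. integral\<^sup>L ?M (upper_envelope g {a..b} (1 / Suc j))
      < integral\<^sup>L ?M g + e * (b - a)) sequentially"
    by (intro order_tendstoD(2)) auto
  then obtain j where "integral\<^sup>L ?M (upper_envelope g {a..b} (1 / Suc j)) < integral\<^sup>L ?M g + e * (b - a)"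
    by (auto simp: eventually_sequentially)
  moreover define r :: real where "r = 1 / Suc j"
  ultimately have r_int: "integral\<^sup>L ?M (upper_envelope g {a..b} r) < integral\<^sup>L ?M g + e * (b - a)"
    by simp
  have r: "0 < r" by (simp add: r_def)
  have "filterlim d at_top sequentially" using grid by (simp add: asymptotically_uniform_grid_def)
  then have "filterlim (\<lambda>n. real (d n)) at_top sequentially"
    by (rule filterlim_compose[OF filterlim_real_sequentially])
  then have "eventually (\<lambda>n. 2 * (b - a) / r < real (d n)) sequentially"
    by (simp add: filterlim_at_top_dense)
  moreover have "eventually (\<lambda>n.
      \<forall>i\<in>{1..d n}. \<bar>x n i - (a + real i * (b - a) / real (d n))\<bar> < r / 2) sequentially"
    using r by (intro asymptotically_uniform_gridD[OF grid]) simp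
  ultimately show ?thesis
  proof eventually_elim
    case (elim n)
    define h where "h = (b - a) / real (d n)"
    have "0 < 2 * (b - a) / r" using ab r by simp
    with elim(1) have d_pos: "0 < real (d n)" by linarith
    have h: "0 < h" "h < r / 2" "b = a + real (d n) * h"
      using elim(1) d_pos ab r by (simp_all add: h_def field_simps)
    have "(\<Sum>i=1..d n. g (x n i)) * h \<le> integral\<^sup>L ?M (upper_envelope g {a..b} r)"
      using elim(2) by (intro riemann_sum_le_integral_upper_envelope[OF g_bound h x_in]) (simp_all add: h_def)
    with r_int have "(\<Sum>i=1..d n. g (x n i)) * h < integral\<^sup>L ?M g + e * (b - a)" by linarith
    then show ?case
      using ab d_pos by (simp add: sample_mean_def interval_mean_def h_def field_simps)
  qed
qed

lemma riemann_sample_mean_tendsto: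
  fixes g :: "real \<Rightarrow> real" and x :: "nat \<Rightarrow> nat \<Rightarrow> real"
  assumes ab: "a < b" and g_bdd: "bounded (g ` {a..b})"
    and cont: "AE t in lebesgue. t \<in> {a..b} \<longrightarrow> continuous (at t within {a..b}) g"
    and grid: "asymptotically_uniform_grid x d a b" and x_in: "\<And>n i. i \<in> {1..d n} \<Longrightarrow> x n i \<in> {a..b}"
  shows "(\<lambda>n. sample_mean (d n) (\<lambda>i. g (x n i))) \<longlonglongrightarrow> interval_mean g a b"
proof -
  obtain B where "\<forall>y\<in>g ` {a..b}. \<bar>y\<bar> \<le> B"
    using g_bdd unfolding bounded_real by blast
  then have B: "\<forall>t\<in>{a..b}. \<bar>g t\<bar> \<le> B" and B_minus: "\<forall>t\<in>{a..b}. \<bar>- g t\<bar> \<le> B" by simp_all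
  have cont_minus: "AE t in lebesgue. t \<in> {a..b} \<longrightarrow> continuous (at t within {a..b}) (\<lambda>t. - g t)"
    using cont by eventually_elim (auto intro: continuous_minus)
  show ?thesis
  proof (rule order_tendstoI)
    fix c assume "interval_mean g a b < c"
    then show "eventually (\<lambda>n. sample_mean (d n) (\<lambda>i. g (x n i)) < c) sequentially"
      using riemann_sample_mean_eventually_less[OF ab B cont grid x_in, of "c - interval_mean g a b"]
      by simp
  next
    fix c assume "c < interval_mean g a b"
    then show "eventually (\<lambda>n. c < sample_mean (d n) (\<lambda>i. g (x n i))) sequentially"
      using riemann_sample_mean_eventually_less[OF ab B_minus cont_minus grid x_in,
          of "interval_mean g a b - c"]
      by (simp add: sample_mean_def interval_mean_def sum_negf)
  qed
qed

section \<open>The distribution described by \<open>f\<close>\<close>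

lemma trapezoid_means_tendsto_grid:
  assumes "a < b" and f_bdd: "bounded (f ` {a..b})"
    and f_cont: "AE t in lebesgue. t \<in> {a..b} \<longrightarrow> continuous (at t within {a..b}) f"
    and "asymptotically_uniform_grid x d a b" "\<And>n i. i \<in> {1..d n} \<Longrightarrow> x n i \<in> {a..b}"
  shows "trapezoid_means_tendsto d (\<lambda>n i. f (x n i)) (\<lambda>\<phi>. interval_mean (\<lambda>t. \<phi> (f t)) a b)"
  unfolding trapezoid_means_tendsto_def
proof (intro allI impI)
  fix \<alpha> \<beta> w :: real
  have "bounded ((\<lambda>t. trapezoid \<alpha> \<beta> w (f t)) ` {a..b})"
    using abs_trapezoid_le_one by (intro boundedI[where B = 1]) auto
  moreover have "AE t in lebesgue. t \<in> {a..b} \<longrightarrow>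
      continuous (at t within {a..b}) (\<lambda>t. trapezoid \<alpha> \<beta> w (f t))"
    using f_cont by eventually_elim (auto intro: continuous_within_compose3[OF isCont_trapezoid])
  ultimately show "(\<lambda>n. sample_mean (d n) (\<lambda>i. trapezoid \<alpha> \<beta> w (f (x n i))))
      \<longlonglongrightarrow> interval_mean (\<lambda>t. trapezoid \<alpha> \<beta> w (f t)) a b"
    using assms by (intro riemann_sample_mean_tendsto) auto
qed

lemma has_asymptotic_distribution_real:
  assumes distr: "has_asymptotic_distribution lam d f a b"
    and \<phi>_cont: "continuous_on UNIV \<phi>" and \<phi>_supp: "bounded {v. \<phi> v \<noteq> 0}"
  shows "(\<lambda>n. sample_mean (d n) (\<lambda>i. \<phi> (lam n i))) \<longlonglongrightarrow> interval_mean (\<lambda>t. \<phi> (f t)) a b"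
proof -
  txt \<open>Damping in the imaginary direction extends \<open>\<phi>\<close> to an admissible test function on \<open>\<complex>\<close>.\<close>
  define F where "F z = complex_of_real (\<phi> (Re z) * max 0 (1 - \<bar>Im z\<bar>))" for z
  have "continuous_on UNIV F"
    unfolding F_def by (intro continuous_intros continuous_on_compose2[OF \<phi>_cont]) auto
  moreover obtain R where R: "\<And>v. \<phi> v \<noteq> 0 \<Longrightarrow> \<bar>v\<bar> \<le> R"
    using \<phi>_supp unfolding bounded_iff by auto
  have "bounded {z. F z \<noteq> 0}"
  proof (rule bounded_subset[OF bounded_cball[of 0 "R + 1"]], rule subsetI)
    fix z assume "z \<in> {z. F z \<noteq> 0}"
    then have "\<bar>Re z\<bar> \<le> R" "\<bar>Im z\<bar> \<le> 1" using R by (auto simp: F_def max_def split: if_splits)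
    with cmod_le[of z] show "z \<in> cball 0 (R + 1)" by simp
  qed
  ultimately have "(\<lambda>n. (\<Sum>i=1..d n. F (complex_of_real (lam n i))) / of_nat (d n))
      \<longlonglongrightarrow> integral\<^sup>L (lebesgue_on {a..b}) (\<lambda>t. F (complex_of_real (f t))) / complex_of_real (b - a)"
    using distr unfolding has_asymptotic_distribution_def by blast
  then have "(\<lambda>n. complex_of_real (sample_mean (d n) (\<lambda>i. \<phi> (lam n i))))
      \<longlonglongrightarrow> complex_of_real (interval_mean (\<lambda>t. \<phi> (f t)) a b)"
    by (simp add: F_def sample_mean_def interval_mean_def)
  then show ?thesis by (simp only: tendsto_of_real_iff)
qed

lemma trapezoid_means_tendsto_distribution:
  assumes "has_asymptotic_distribution lam d f a b"
  shows "trapezoid_means_tendsto d lam (\<lambda>\<phi>. interval_mean (\<lambda>t. \<phi> (f t)) a b)"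
  unfolding trapezoid_means_tendsto_def
  using has_asymptotic_distribution_real[OF assms continuous_on_trapezoid bounded_trapezoid_support]
  by blast

lemma essential_range_measure_pos:
  assumes "z \<in> essential_range f a b" "0 < e"
  shows "0 < measure (lebesgue_on {a..b}) {t \<in> {a..b}. \<bar>f t - z\<bar> < e}"
proof -
  have "emeasure lebesgue {t \<in> {a..b}. \<bar>f t - z\<bar> < e} \<le> emeasure lebesgue {a..b}"
    by (intro emeasure_mono) auto
  also have "\<dots> < top" by (simp add: emeasure_lborel_Icc_eq)
  finally have "emeasure lebesgue {t \<in> {a..b}. \<bar>f t - z\<bar> < e} < top" .
  with assms have "0 < measure lebesgue {t \<in> {a..b}. \<bar>f t - z\<bar> < e}"
    by (simp add: measure_def enn2real_positive_iff essential_range_def)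
  then show ?thesis by (subst measure_restrict_space) auto
qed

lemma integrable_trapezoid_comp:
  fixes f :: "real \<Rightarrow> real"
  assumes "f \<in> borel_measurable (lebesgue_on {a..b})"
  shows "integrable (lebesgue_on {a..b}) (\<lambda>t. trapezoid \<alpha> \<beta> w (f t))"
proof (rule finite_measure.integrable_const_bound[where B = 1])
  show "finite_measure (lebesgue_on {a..b})" by (rule finite_measure_lebesgue_on) simp
  show "(\<lambda>t. trapezoid \<alpha> \<beta> w (f t)) \<in> borel_measurable (lebesgue_on {a..b})"
    using measurable_compose[OF assms borel_measurable_continuous_onI[OF continuous_on_trapezoid]]
    by (simp add: comp_def)
qed (simp_all add: abs_trapezoid_le_one)

lemma interval_mean_trapezoid_less:
  assumes ab: "a < b" and f_meas: "f \<in> borel_measurable (lebesgue_on {a..b})"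
    and f_ge: "\<And>t. t \<in> {a..b} \<Longrightarrow> \<alpha> \<le> f t"
    and mid: "(\<beta> + w + \<beta>') / 2 \<in> essential_range f a b" and w: "0 < w" and gap: "\<beta> + w < \<beta>'"
  shows "interval_mean (\<lambda>t. trapezoid \<alpha> \<beta> w (f t)) a b
           < interval_mean (\<lambda>t. trapezoid \<alpha> \<beta>' w (f t)) a b"
proof -
  let ?M = "lebesgue_on {a..b}"
  define A where "A = {t \<in> {a..b}. \<bar>f t - (\<beta> + w + \<beta>') / 2\<bar> < (\<beta>' - (\<beta> + w)) / 2}"
  have A_sets: "A \<in> sets ?M"
  proof -
    have "A = f -` {\<beta> + w <..< \<beta>'} \<inter> space ?M"
      unfolding A_def by (auto simp: abs_less_iff field_simps)
    then show ?thesis using measurable_sets[OF f_meas, of "{\<beta> + w <..< \<beta>'}"] by simp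
  qed
  have A_sub: "A \<subseteq> {a..b}" unfolding A_def by auto
  have A_pos: "0 < measure ?M A"
    unfolding A_def using gap by (intro essential_range_measure_pos[OF mid]) simp
  have fin: "finite_measure ?M" by (rule finite_measure_lebesgue_on) simp
  have "measure ?M A = integral\<^sup>L ?M (indicator A :: real \<Rightarrow> real)"
    using A_sets by (simp add: Int_absorb2 A_sub)
  also have "\<dots> \<le> integral\<^sup>L ?M (\<lambda>t. trapezoid \<alpha> \<beta>' w (f t) - trapezoid \<alpha> \<beta> w (f t))"
  proof (rule integral_mono)
    show "integrable ?M (indicator A :: real \<Rightarrow> real)"
      using A_sets finite_measure.emeasure_finite[OF fin, of A]
      by (simp add: less_top)
    show "integrable ?M (\<lambda>t. trapezoid \<alpha> \<beta>' w (f t) - trapezoid \<alpha> \<beta> w (f t))"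
      using integrable_trapezoid_comp[OF f_meas] by simp
    fix t assume t: "t \<in> space ?M"
    show "indicator A t \<le> trapezoid \<alpha> \<beta>' w (f t) - trapezoid \<alpha> \<beta> w (f t)"
    proof (cases "t \<in> A")
      case True
      then have "\<beta> + w < f t" "f t < \<beta>'" unfolding A_def by (auto simp: abs_less_iff field_simps)
      with t w f_ge show ?thesis by (simp add: True trapezoid_eq_one trapezoid_eq_zero_right)
    next
      case False
      with w gap show ?thesis by (simp add: trapezoid_mono)
    qed
  qed
  also have "\<dots> = integral\<^sup>L ?M (\<lambda>t. trapezoid \<alpha> \<beta>' w (f t))
      - integral\<^sup>L ?M (\<lambda>t. trapezoid \<alpha> \<beta> w (f t))"
    by (intro Bochner_Integration.integral_diff integrable_trapezoid_comp[OF f_meas])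
  finally show ?thesis
    using A_pos ab by (simp add: interval_mean_def divide_strict_right_mono)
qed

lemma charges_subintervals_essential_range:
  assumes "a < b" "f \<in> borel_measurable (lebesgue_on {a..b})"
    and ER: "essential_range f a b = {m..M}" and f_ge: "\<And>t. t \<in> {a..b} \<Longrightarrow> m \<le> f t"
  shows "charges_subintervals (\<lambda>\<phi>. interval_mean (\<lambda>t. \<phi> (f t)) a b) m M"
  unfolding charges_subintervals_def
proof (intro allI impI, elim conjE)
  fix \<alpha> \<beta> \<beta>' w :: real assume "0 < w" "\<alpha> \<le> m" "m \<le> \<beta> + w" "\<beta> + w < \<beta>'" "\<beta>' \<le> M"
  moreover have "\<alpha> \<le> f t" if "t \<in> {a..b}" for t using f_ge[OF that] \<open>\<alpha> \<le> m\<close> by simp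
  ultimately show "interval_mean (\<lambda>t. trapezoid \<alpha> \<beta> w (f t)) a b
      < interval_mean (\<lambda>t. trapezoid \<alpha> \<beta>' w (f t)) a b"
    using assms by (intro interval_mean_trapezoid_less) (auto simp: ER)
qed

theorem corollary2p3:
  fixes f :: "real \<Rightarrow> real" and a b :: real
    and lam :: "nat \<Rightarrow> nat \<Rightarrow> real" and d :: "nat \<Rightarrow> nat"
    and eps :: "nat \<Rightarrow> real" and x :: "nat \<Rightarrow> nat \<Rightarrow> real"
  assumes ab: "a < b"
    and f_bdd: "bounded (f ` {a..b})"
    and f_cont_ae: "AE t in lebesgue. t \<in> {a..b} \<longrightarrow> continuous (at t within {a..b}) f"
    and f_ER: "essential_range f a b = {Inf (f ` {a..b}) .. Sup (f ` {a..b})}"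
    and d_lim: "filterlim d at_top sequentially"
    and distr: "has_asymptotic_distribution lam d f a b"
    and eps_lim: "eps \<longlonglongrightarrow> 0"
    and lam_in: "\<And>n i. i \<in> {1..d n} \<Longrightarrow>
        lam n i \<in> {Inf (f ` {a..b}) - eps n .. Sup (f ` {a..b}) + eps n}"
    and grid: "asymptotically_uniform_grid x d a b"
    and grid_in: "\<And>n i. i \<in> {1..d n} \<Longrightarrow> x n i \<in> {a..b}"
  shows "(\<forall>\<sigma> \<tau> :: nat \<Rightarrow> nat \<Rightarrow> nat.
            (\<forall>n. \<sigma> n permutes {1..d n} \<and> \<tau> n permutes {1..d n} \<and>
                 (\<forall>i j. 1 \<le> i \<and> i \<le> j \<and> j \<le> d n \<longrightarrow>
                    f (x n (\<sigma> n i)) \<le> f (x n (\<sigma> n j)) \<and>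
                    lam n (\<tau> n i) \<le> lam n (\<tau> n j)))
            \<longrightarrow> (\<lambda>n. Max {\<bar>f (x n (\<sigma> n i)) - lam n (\<tau> n i)\<bar> | i. i \<in> {1..d n}})
                  \<longlonglongrightarrow> 0)
       \<and> (\<lambda>n. Min {Max {\<bar>f (x n i) - lam n (\<tau> i)\<bar> | i. i \<in> {1..d n}} | \<tau>.
                      \<tau> permutes {1..d n}}) \<longlonglongrightarrow> 0"
proof -
  define m M where "m = Inf (f ` {a..b})" and "M = Sup (f ` {a..b})"
  define L where "L = (\<lambda>\<phi>. interval_mean (\<lambda>t. \<phi> (f t)) a b)"
  have f_range: "f t \<in> {m..M}" if "t \<in> {a..b}" for t
    using that f_bdd bounded_imp_bdd_below bounded_imp_bdd_above
    by (auto simp: m_def M_def intro: cInf_lower cSup_upper)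
  have "f \<in> borel_measurable (lebesgue_on {a..b})"
    using f_bdd f_cont_ae by (intro borel_measurable_AE_continuous) auto
  then have gap: "charges_subintervals L m M"
    unfolding L_def using ab f_ER f_range
    by (intro charges_subintervals_essential_range) (auto simp: m_def M_def)
  have x_lim: "trapezoid_means_tendsto d (\<lambda>n i. f (x n i)) L"
    unfolding L_def using ab f_bdd f_cont_ae grid grid_in by (rule trapezoid_means_tendsto_grid)
  have lam_lim: "trapezoid_means_tendsto d lam L"
    unfolding L_def using distr by (rule trapezoid_means_tendsto_distribution)
  have x_within: "asymptotically_within d (\<lambda>n i. f (x n i)) m M"
    using f_range grid_in by (intro asymptotically_within_shrinking[of "\<lambda>_. 0"]) auto
  have lam_within: "asymptotically_within d lam m M"
    using eps_lim lam_in unfolding m_def M_def by (rule asymptotically_within_shrinking)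
  have d_pos: "eventually (\<lambda>n. 0 < d n) sequentially"
    using d_lim unfolding filterlim_at_top by (auto elim!: allE[of _ 1] eventually_mono)
  note sorted_close = sorted_rearrangements_tendsto[OF d_pos x_lim lam_lim gap x_within lam_within]
  have min_lim:
    "(\<lambda>n. Min {Max {\<bar>f (x n i) - lam n (\<tau> i)\<bar> | i. i \<in> {1..d n}} | \<tau>. \<tau> permutes {1..d n}}) \<longlonglongrightarrow> 0"
    using d_pos sorted_close by (rule Min_Max_permutations_tendsto_0)
  show ?thesis by (intro conjI allI impI sorted_close min_lim) (auto simp: mono_on_def)
qed

end
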